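(* Consider the sub-$\ell^\infty$ structure on $\mathbb{R}^3$ defined by $X_1=\partial_x-\tfrac{y}{2}\partial_z$, $X_2=\partial_y+\tfrac{x}{2}\partial_z$. (a) Let $(\lambda,\gamma)$ be an extremal pair on $[0,T]$ with $\gamma$ nonconstant and control $u$, and suppose that for some $j\in\{1,2\}$ the restriction to some open interval $I$ is a $\varphi_j$-singular arc. Then $\varphi_j\equiv0$ on all of $[0,T]$ and $u_{3-j}$ is a.e. constantly equal to $1$ or constantly equal to $-1$ on $[0,T]$. (b) Conversely, every admissible trajectory for which, for some $i\in\{1,2\}$, $u_i$ is a.e. constantly equal to $1$ or a.e. constantly equal to $-1$, admits an extremal lift for which $\varphi_{3-i}\equiv0$ on the whole domain. (c) Every such admissible trajectory (with $u_i\equiv1$ or $u_i\equiv-1$ for some $i$) is a time-minimizer.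
   Context: Sub-$\ell^\infty$ structure defined by smooth vector fields $X_1,\dots,X_k$ on a manifold $M$: an admissible trajectory is an absolutely continuous curve $\gamma:[0,T]\to M$ together with a measurable control $u=(u_1,\dots,u_k):[0,T]\to\mathbb{R}^k$ with $|u_i(t)|\le1$ for all $i$ and a.e. $t$, such that $\dot\gamma(t)=\sum_i u_i(t)X_i(\gamma(t))$ for a.e. $t$. It is a time-minimizer (optimal) if no admissible trajectory joins $\gamma(0)$ to $\gamma(T)$ in time less than $T$. An extremal pair is a pair $(\lambda,\gamma)$ where $\gamma$ is admissible with control $u$ and $\lambda:[0,T]\to T^*M$ is absolutely continuous with $\lambda(t)\in T^*_{\gamma(t)}M\setminus\{0\}$, such that, with $\mathcal H(\lambda,p,u)=\sum_i u_i\langle\lambda,X_i(p)\rangle$, in canonical coordinates $\dot\lambda=-\partial_p\mathcal H(\lambda,\gamma,u)$, $\dot\gamma=\partial_\lambda\mathcal H(\lambda,\gamma,u)$ a.e., and there is a constant $\lambda_0\ge0$ with $\sum_iu_i(t)\langle\lambda(t),X_i(\gamma(t))\rangle=\sum_i|\langle\lambda(t),X_i(\gamma(t))\rangle|=\lambda_0$ for a.e. $t$; $\gamma$ is then an extremal trajectory and $\lambda$ an extremal lift. The switching functions are $\varphi_j(t)=\langle\lambda(t),X_j(\gamma(t))\rangle$. The restriction of an extremal pair to an open interval $I$ is a $\varphi_j$-singular arc if $\varphi_j\equiv0$ on $I$. *)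

theory Defs
  imports "HOL-Analysis.Analysis"
begin

type_synonym pt = "real \<times> real \<times> real"

definition abs_cont_on :: "real set \<Rightarrow> (real \<Rightarrow> 'a::real_normed_vector) \<Rightarrow> bool" where
  "abs_cont_on S f \<longleftrightarrow>
     (\<forall>\<epsilon>>0. \<exists>\<delta>>0. \<forall>(n::nat) (a::nat \<Rightarrow> real) b.
        (\<forall>k<n. a k \<le> b k \<and> {a k..b k} \<subseteq> S) \<and>
        (\<forall>k<n. \<forall>l<n. k \<noteq> l \<longrightarrow> b k \<le> a l \<or> b l \<le> a k) \<and>
        (\<Sum>k<n. b k - a k) < \<delta>
        \<longrightarrow> (\<Sum>k<n. norm (f (b k) - f (a k))) < \<epsilon>)"

definition X :: "nat \<Rightarrow> pt \<Rightarrow> pt" where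
  "X i p = (case p of (x, y, z) \<Rightarrow>
      (if i = 1 then (1, 0, - y / 2) else if i = 2 then (0, 1, x / 2) else (0, 0, 0)))"

definition admissible :: "real \<Rightarrow> (real \<Rightarrow> pt) \<Rightarrow> (nat \<Rightarrow> real \<Rightarrow> real) \<Rightarrow> bool" where
  "admissible T \<gamma> u \<longleftrightarrow> 0 \<le> T \<and> abs_cont_on {0..T} \<gamma> \<and>
     (\<forall>i\<in>{1,2}. u i \<in> borel_measurable (lebesgue_on {0..T})) \<and>
     (AE t in lebesgue. t \<in> {0..T} \<longrightarrow>
        (\<forall>i\<in>{1,2}. \<bar>u i t\<bar> \<le> 1) \<and>
        (\<gamma> has_vector_derivative (\<Sum>i\<in>{1,2}. u i t *\<^sub>R X i (\<gamma> t))) (at t))"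

definition time_minimizer :: "real \<Rightarrow> (real \<Rightarrow> pt) \<Rightarrow> bool" where
  "time_minimizer T \<gamma> \<longleftrightarrow>
     (\<forall>T' \<gamma>' u'. admissible T' \<gamma>' u' \<and> \<gamma>' 0 = \<gamma> 0 \<and> \<gamma>' T' = \<gamma> T \<longrightarrow> T \<le> T')"

text \<open>Switching function phi_j(t) = <lambda(t), X_j(gamma(t))>; covectors on R^3 are
  identified with R^3 via canonical coordinates and the pairing is the inner product.\<close>
definition phi :: "(real \<Rightarrow> pt) \<Rightarrow> (real \<Rightarrow> pt) \<Rightarrow> nat \<Rightarrow> real \<Rightarrow> real" where
  "phi lam \<gamma> j t = inner (lam t) (X j (\<gamma> t))"

text \<open>Adjoint equation  d lambda/dt = - d_p H(lambda, gamma, u), where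
  H(lambda,p,u) = sum_i u_i <lambda, X_i p>, written via the Frechet derivative of X_i;
  the equation d gamma/dt = d_lambda H is part of admissibility.\<close>
definition extremal_pair :: "real \<Rightarrow> (real \<Rightarrow> pt) \<Rightarrow> (real \<Rightarrow> pt) \<Rightarrow> (nat \<Rightarrow> real \<Rightarrow> real) \<Rightarrow> bool" where
  "extremal_pair T lam \<gamma> u \<longleftrightarrow> admissible T \<gamma> u \<and> abs_cont_on {0..T} lam \<and>
     (\<forall>t\<in>{0..T}. lam t \<noteq> 0) \<and>
     (AE t in lebesgue. t \<in> {0..T} \<longrightarrow>
        (\<exists>\<mu>. (lam has_vector_derivative \<mu>) (at t) \<and>
             (\<forall>v. inner \<mu> v = - (\<Sum>i\<in>{1,2}. u i t * inner (lam t) (frechet_derivative (X i) (at (\<gamma> t)) v))))) \<and>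
     (\<exists>lam0\<ge>0. AE t in lebesgue. t \<in> {0..T} \<longrightarrow>
        (\<Sum>i\<in>{1,2}. u i t * phi lam \<gamma> i t) = lam0 \<and> (\<Sum>i\<in>{1,2}. \<bar>phi lam \<gamma> i t\<bar>) = lam0)"

end

theory Submission
  imports Defs
begin

text \<open>The adjoint equation keeps the vertical covector component \<open>k\<close> constant, and the
  switching functions are affine in the horizontal position: \<open>\<phi>\<^sub>1 = C\<^sub>1 - k y\<close>,
  \<open>\<phi>\<^sub>2 = C\<^sub>2 + k x\<close>. On a \<open>\<phi>\<^sub>j\<close>-singular arc with \<open>k \<noteq> 0\<close> the coordinate
  that \<open>\<phi>\<^sub>j\<close> depends on is frozen, so the other control vanishes there, which forces the
  Hamiltonian constant to be zero; then both switching functions vanish almost everywhere and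
  the trajectory is constant. Hence \<open>k = 0\<close>, the switching functions are constant, \<open>\<phi>\<^sub>j \<equiv> 0\<close>,
  and the maximum condition makes the other control equal to the sign of the nonzero one.
  Conversely, a saturated control \<open>u\<^sub>i \<equiv> \<plusminus>1\<close> is lifted by the constant covector
  \<open>\<plusminus>dx\<^sub>i\<close>, and it is time-optimal because the \<open>i\<close>-th horizontal coordinate changes with
  speed at most one along every admissible trajectory.\<close>

section \<open>Absolute continuity\<close>

definition nonoverlapping_intervals :: "real set \<Rightarrow> nat \<Rightarrow> (nat \<Rightarrow> real) \<Rightarrow> (nat \<Rightarrow> real) \<Rightarrow> bool" where
  "nonoverlapping_intervals S n a b \<longleftrightarrow>
     (\<forall>k<n. a k \<le> b k \<and> {a k..b k} \<subseteq> S) \<and> (\<forall>k<n. \<forall>l<n. k \<noteq> l \<longrightarrow> b k \<le> a l \<or> b l \<le> a k)"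

lemma abs_cont_on_iff:
  "abs_cont_on S f \<longleftrightarrow> (\<forall>e>0. \<exists>\<delta>>0. \<forall>n a b. nonoverlapping_intervals S n a b \<and> (\<Sum>k<n. b k - a k) < \<delta>
     \<longrightarrow> (\<Sum>k<n. norm (f (b k) - f (a k))) < e)"
  unfolding abs_cont_on_def nonoverlapping_intervals_def by (simp add: conj_assoc)

lemma abs_cont_onD:
  assumes "abs_cont_on S f" "0 < e"
  obtains \<delta> where "0 < \<delta>"
    "\<And>n a b. nonoverlapping_intervals S n a b \<Longrightarrow> (\<Sum>k<n. b k - a k) < \<delta>
       \<Longrightarrow> (\<Sum>k<n. norm (f (b k) - f (a k))) < e"
  using assms unfolding abs_cont_on_iff by meson

lemma nonoverlapping_intervals_mono:
  "nonoverlapping_intervals S n a b \<Longrightarrow> S \<subseteq> S' \<Longrightarrow> nonoverlapping_intervals S' n a b"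
  unfolding nonoverlapping_intervals_def by blast

lemma abs_cont_on_subset: "abs_cont_on S f \<Longrightarrow> S' \<subseteq> S \<Longrightarrow> abs_cont_on S' f"
  unfolding abs_cont_on_iff by (meson nonoverlapping_intervals_mono)

lemma abs_cont_on_const: "abs_cont_on S (\<lambda>t. c)"
  unfolding abs_cont_on_def by auto

lemma abs_cont_on_ident: "abs_cont_on S (\<lambda>t::real. t)"
  unfolding abs_cont_on_iff
proof (intro allI impI)
  fix e :: real assume "0 < e"
  have "(\<Sum>k<n. norm (b k - a k)) < e"
    if "nonoverlapping_intervals S n a b" "(\<Sum>k<n. b k - a k) < e" for n a b
    using that by (simp add: nonoverlapping_intervals_def)
  with \<open>0 < e\<close> show "\<exists>\<delta>>0. \<forall>n a b. nonoverlapping_intervals S n a b \<and> (\<Sum>k<n. b k - a k) < \<delta>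
     \<longrightarrow> (\<Sum>k<n. norm (b k - a k)) < e" by blast
qed

lemma abs_cont_on_add:
  assumes f: "abs_cont_on S f" and g: "abs_cont_on S g"
  shows "abs_cont_on S (\<lambda>t. f t + g t)"
  unfolding abs_cont_on_iff
proof (intro allI impI)
  fix e :: real assume "0 < e"
  then have "0 < e / 2" by simp
  obtain \<delta>1 where "0 < \<delta>1" and \<delta>1: "\<And>n a b. nonoverlapping_intervals S n a b \<Longrightarrow>
      (\<Sum>k<n. b k - a k) < \<delta>1 \<Longrightarrow> (\<Sum>k<n. norm (f (b k) - f (a k))) < e / 2"
    using abs_cont_onD[OF f \<open>0 < e / 2\<close>] by blast
  obtain \<delta>2 where "0 < \<delta>2" and \<delta>2: "\<And>n a b. nonoverlapping_intervals S n a b \<Longrightarrow>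
      (\<Sum>k<n. b k - a k) < \<delta>2 \<Longrightarrow> (\<Sum>k<n. norm (g (b k) - g (a k))) < e / 2"
    using abs_cont_onD[OF g \<open>0 < e / 2\<close>] by blast
  have "(\<Sum>k<n. norm (f (b k) + g (b k) - (f (a k) + g (a k)))) < e"
    if "nonoverlapping_intervals S n a b" "(\<Sum>k<n. b k - a k) < min \<delta>1 \<delta>2" for n a b
  proof -
    have "(\<Sum>k<n. norm (f (b k) + g (b k) - (f (a k) + g (a k))))
        \<le> (\<Sum>k<n. norm (f (b k) - f (a k)) + norm (g (b k) - g (a k)))"
      by (intro sum_mono norm_diff_triangle_ineq)
    also have "\<dots> < e / 2 + e / 2"
      unfolding sum.distrib using that by (intro add_strict_mono \<delta>1 \<delta>2) auto
    finally show ?thesis by simp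
  qed
  then show "\<exists>\<delta>>0. \<forall>n a b. nonoverlapping_intervals S n a b \<and> (\<Sum>k<n. b k - a k) < \<delta>
      \<longrightarrow> (\<Sum>k<n. norm (f (b k) + g (b k) - (f (a k) + g (a k)))) < e"
    using \<open>0 < \<delta>1\<close> \<open>0 < \<delta>2\<close> by (intro exI[of _ "min \<delta>1 \<delta>2"]) auto
qed

lemma abs_cont_on_bounded_linear:
  assumes f: "abs_cont_on S f" and L: "bounded_linear L"
  shows "abs_cont_on S (\<lambda>t. L (f t))"
  unfolding abs_cont_on_iff
proof (intro allI impI)
  fix e :: real assume "0 < e"
  obtain K where "0 < K" and K: "\<And>x. norm (L x) \<le> norm x * K"
    using bounded_linear.pos_bounded[OF L] by blast
  obtain \<delta> where "0 < \<delta>" and \<delta>: "\<And>n a b. nonoverlapping_intervals S n a b \<Longrightarrow>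
      (\<Sum>k<n. b k - a k) < \<delta> \<Longrightarrow> (\<Sum>k<n. norm (f (b k) - f (a k))) < e / K"
    using abs_cont_onD[OF f] \<open>0 < e\<close> \<open>0 < K\<close> by (metis divide_pos_pos)
  have "(\<Sum>k<n. norm (L (f (b k)) - L (f (a k)))) < e"
    if "nonoverlapping_intervals S n a b" "(\<Sum>k<n. b k - a k) < \<delta>" for n a b
  proof -
    have "(\<Sum>k<n. norm (L (f (b k)) - L (f (a k)))) \<le> (\<Sum>k<n. norm (f (b k) - f (a k))) * K"
      unfolding sum_distrib_right
      by (intro sum_mono) (metis K linear_diff[OF bounded_linear.linear[OF L]])
    also have "\<dots> < e / K * K"
      using \<delta>[OF that] \<open>0 < K\<close> by (rule mult_strict_right_mono)
    finally show ?thesis using \<open>0 < K\<close> by simp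
  qed
  then show "\<exists>\<delta>>0. \<forall>n a b. nonoverlapping_intervals S n a b \<and> (\<Sum>k<n. b k - a k) < \<delta>
      \<longrightarrow> (\<Sum>k<n. norm (L (f (b k)) - L (f (a k)))) < e"
    using \<open>0 < \<delta>\<close> by blast
qed

lemma abs_cont_on_imp_continuous_on:
  assumes f: "abs_cont_on {a..b} f"
  shows "continuous_on {a..b} f"
  unfolding continuous_on_iff
proof (intro ballI allI impI)
  fix x e :: real assume x: "x \<in> {a..b}" and "0 < e"
  obtain \<delta> where "0 < \<delta>" and \<delta>: "\<And>n l r. nonoverlapping_intervals {a..b} n l r \<Longrightarrow>
      (\<Sum>k<n. r k - l k) < \<delta> \<Longrightarrow> (\<Sum>k<n. norm (f (r k) - f (l k))) < e"
    using abs_cont_onD[OF f \<open>0 < e\<close>] by blast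
  have "dist (f x') (f x) < e" if x': "x' \<in> {a..b}" "dist x' x < \<delta>" for x'
  proof -
    have "(\<Sum>k<Suc 0. norm (f (max x x') - f (min x x'))) < e"
      using x x' by (intro \<delta>) (auto simp: nonoverlapping_intervals_def dist_real_def)
    then show ?thesis
      by (cases "x \<le> x'") (auto simp: dist_norm max_def min_def norm_minus_commute)
  qed
  then show "\<exists>d>0. \<forall>x'\<in>{a..b}. dist x' x < d \<longrightarrow> dist (f x') (f x) < e"
    using \<open>0 < \<delta>\<close> by blast
qed

lemma interior_disjoint_intervals_ordered:
  fixes c d c' d' :: real
  assumes "c < d" "c' < d'" "interior {c..d} \<inter> interior {c'..d'} = {}"
  shows "d \<le> c' \<or> d' \<le> c"
proof (rule ccontr)
  assume "\<not> (d \<le> c' \<or> d' \<le> c)"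
  then have "(max c c' + min d d') / 2 \<in> {c<..<d} \<inter> {c'<..<d'}"
    using assms(1,2) by (simp add: max_def min_def)
  with assms(3) show False by simp
qed

lemma content_tagged_partial_division:
  assumes "p tagged_partial_division_of S"
  shows "(\<Sum>(x, K)\<in>p. measure lebesgue K) = measure lebesgue (\<Union>(snd ` p))"
proof -
  have p: "p tagged_division_of \<Union>(snd ` p)"
    using assms by (rule tagged_partial_division_of_Union_self)
  have "(\<Sum>(x, K)\<in>p. measure lebesgue K) = (\<Sum>K\<in>snd ` p. measure lebesgue K)"
    using p by (rule sum.over_tagged_division_lemma) (simp add: content_eq_0_interior)
  also have "\<dots> = measure lebesgue (\<Union>(snd ` p))"
    using division_of_tagged_division[OF p] by (rule content_division)
  finally show ?thesis .
qed

lemma tagged_partial_division_real_interval: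
  fixes S :: "real set"
  assumes "p tagged_partial_division_of S" "(x, K) \<in> p"
  shows "K = {Inf K..Sup K}" "Inf K \<le> x" "x \<le> Sup K" "K \<subseteq> S"
    and "measure lebesgue K = Sup K - Inf K"
proof -
  obtain c d where K: "K = cbox c d"
    using tagged_partial_division_ofD(4)[OF assms] by blast
  moreover have "x \<in> K" "K \<subseteq> S"
    using tagged_partial_division_ofD(2,3)[OF assms] by auto
  ultimately have "c \<le> x" "x \<le> d" "K = {c..d}"
    by auto
  then show "K = {Inf K..Sup K}" "Inf K \<le> x" "x \<le> Sup K" "K \<subseteq> S"
    and "measure lebesgue K = Sup K - Inf K"
    using \<open>K \<subseteq> S\<close> by simp_all
qed

lemma tagged_partial_division_nonoverlapping_intervals:
  assumes p: "p tagged_partial_division_of S" and \<phi>: "bij_betw \<phi> {..<n} p"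
    and nondegenerate: "\<And>xK. xK \<in> p \<Longrightarrow> Inf (snd xK) < Sup (snd xK)"
  shows "nonoverlapping_intervals S n (\<lambda>k. Inf (snd (\<phi> k))) (\<lambda>k. Sup (snd (\<phi> k)))"
proof -
  define a where "a k = Inf (snd (\<phi> k))" for k
  define b where "b k = Sup (snd (\<phi> k))" for k
  have \<phi>p: "\<phi> k \<in> p" if "k < n" for k
    using \<phi> that by (auto simp: bij_betw_def)
  have \<phi>K: "snd (\<phi> k) = {a k..b k} \<and> a k < b k \<and> {a k..b k} \<subseteq> S" if k: "k < n" for k
  proof -
    have "(fst (\<phi> k), snd (\<phi> k)) \<in> p"
      using \<phi>p[OF k] by simp
    note interval = tagged_partial_division_real_interval[OF p this]
    have "snd (\<phi> k) = {a k..b k}"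
      unfolding a_def b_def by (rule interval(1))
    moreover have "a k < b k"
      unfolding a_def b_def by (rule nondegenerate[OF \<phi>p[OF k]])
    ultimately show ?thesis
      using interval(4) by simp
  qed
  have "b k \<le> a l \<or> b l \<le> a k" if "k < n" "l < n" "k \<noteq> l" for k l
  proof (rule interior_disjoint_intervals_ordered)
    have "\<phi> k \<noteq> \<phi> l"
      using \<phi> that by (auto simp: bij_betw_def inj_on_def)
    then have "interior (snd (\<phi> k)) \<inter> interior (snd (\<phi> l)) = {}"
      using tagged_partial_division_ofD(5)[OF p, of "fst (\<phi> k)" "snd (\<phi> k)" "fst (\<phi> l)" "snd (\<phi> l)"]
        \<phi>p that by simp
    then show "interior {a k..b k} \<inter> interior {a l..b l} = {}"
      using \<phi>K[OF that(1)] \<phi>K[OF that(2)] by simp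
  qed (use \<phi>K[OF that(1)] \<phi>K[OF that(2)] in simp_all)
  then show ?thesis
    unfolding nonoverlapping_intervals_def a_def[symmetric] b_def[symmetric]
    using \<phi>K by (blast intro: less_imp_le)
qed

lemma sum_tagged_partial_division_nondegenerate:
  fixes S :: "real set"
  assumes p: "p tagged_partial_division_of S" and "\<And>c. h c c = 0"
  shows "(\<Sum>(x, K)\<in>{xK\<in>p. Inf (snd xK) < Sup (snd xK)}. h (Inf K) (Sup K)) = (\<Sum>(x, K)\<in>p. h (Inf K) (Sup K))"
proof (rule sum.mono_neutral_left)
  show "finite p"
    using p by (rule tagged_partial_division_ofD(1))
  show "\<forall>xK\<in>p - {xK\<in>p. Inf (snd xK) < Sup (snd xK)}. (case xK of (x, K) \<Rightarrow> h (Inf K) (Sup K)) = 0"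
  proof
    fix xK assume "xK \<in> p - {xK\<in>p. Inf (snd xK) < Sup (snd xK)}"
    then obtain x K where xK: "xK = (x, K)" "(x, K) \<in> p" "\<not> Inf K < Sup K"
      by (cases xK) auto
    with tagged_partial_division_real_interval(2,3)[OF p xK(2)] have "Sup K = Inf K"
      by simp
    with xK(1) \<open>\<And>c. h c c = 0\<close> show "(case xK of (x, K) \<Rightarrow> h (Inf K) (Sup K)) = 0"
      by simp
  qed
qed auto

lemma abs_cont_on_tagged_partial_division:
  assumes f: "abs_cont_on S f" and "0 < e"
  obtains \<delta> where "0 < \<delta>"
    "\<And>p. p tagged_partial_division_of S \<Longrightarrow> measure lebesgue (\<Union>(snd ` p)) < \<delta>
       \<Longrightarrow> (\<Sum>(x, K)\<in>p. norm (f (Sup K) - f (Inf K))) < e"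
proof -
  obtain \<delta> where "0 < \<delta>" and \<delta>: "\<And>n a b. nonoverlapping_intervals S n a b \<Longrightarrow>
      (\<Sum>k<n. b k - a k) < \<delta> \<Longrightarrow> (\<Sum>k<n. norm (f (b k) - f (a k))) < e"
    using abs_cont_onD[OF f \<open>0 < e\<close>] by blast
  have "(\<Sum>(x, K)\<in>p. norm (f (Sup K) - f (Inf K))) < e"
    if p: "p tagged_partial_division_of S" and small: "measure lebesgue (\<Union>(snd ` p)) < \<delta>" for p
  proof -
    define q where "q = {xK\<in>p. Inf (snd xK) < Sup (snd xK)}"
    have "q \<subseteq> p" "finite p"
      using tagged_partial_division_ofD(1)[OF p] by (auto simp: q_def)
    then have q: "q tagged_partial_division_of S" "finite q"
      using p by (auto intro: tagged_partial_division_subset finite_subset)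
    then obtain \<phi> where \<phi>: "bij_betw \<phi> {..<card q} q"
      using ex_bij_betw_nat_finite lessThan_atLeast0 by metis
    have nonoverlapping: "nonoverlapping_intervals S (card q) (\<lambda>k. Inf (snd (\<phi> k))) (\<lambda>k. Sup (snd (\<phi> k)))"
      using q(1) \<phi> by (rule tagged_partial_division_nonoverlapping_intervals) (simp add: q_def)
    have "(\<Sum>k<card q. Sup (snd (\<phi> k)) - Inf (snd (\<phi> k))) = (\<Sum>k<card q. measure lebesgue (snd (\<phi> k)))"
    proof (rule sum.cong)
      fix k assume "k \<in> {..<card q}"
      then have "(fst (\<phi> k), snd (\<phi> k)) \<in> p"
        using \<phi> \<open>q \<subseteq> p\<close> by (auto simp: bij_betw_def)
      then show "Sup (snd (\<phi> k)) - Inf (snd (\<phi> k)) = measure lebesgue (snd (\<phi> k))"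
        by (rule tagged_partial_division_real_interval(5)[OF p, symmetric])
    qed simp
    also have "\<dots> = (\<Sum>(x, K)\<in>q. measure lebesgue K)"
      using sum.reindex_bij_betw[OF \<phi>, of "\<lambda>xK. measure lebesgue (snd xK)"] by (simp add: case_prod_unfold)
    also have "\<dots> \<le> (\<Sum>(x, K)\<in>p. measure lebesgue K)"
      using \<open>finite p\<close> \<open>q \<subseteq> p\<close> by (intro sum_mono2) auto
    also have "\<dots> < \<delta>"
      using small by (simp add: content_tagged_partial_division[OF p])
    finally have "(\<Sum>k<card q. norm (f (Sup (snd (\<phi> k))) - f (Inf (snd (\<phi> k))))) < e"
      by (rule \<delta>[OF nonoverlapping])
    then have "(\<Sum>(x, K)\<in>q. norm (f (Sup K) - f (Inf K))) < e"
      using sum.reindex_bij_betw[OF \<phi>, of "\<lambda>xK. norm (f (Sup (snd xK)) - f (Inf (snd xK)))"]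
      by (simp add: case_prod_unfold)
    moreover have "(\<Sum>(x, K)\<in>q. norm (f (Sup K) - f (Inf K))) = (\<Sum>(x, K)\<in>p. norm (f (Sup K) - f (Inf K)))"
      unfolding q_def using p by (rule sum_tagged_partial_division_nondegenerate) simp
    ultimately show ?thesis by simp
  qed
  with \<open>0 < \<delta>\<close> show ?thesis using that by blast
qed

lemma has_vector_derivative_local_bound:
  assumes "(f has_vector_derivative D) (at t)" "norm D \<le> B" "0 < e"
  obtains r where "0 < r" "\<And>s. \<bar>s - t\<bar> < r \<Longrightarrow> norm (f s - f t) \<le> (B + e) * \<bar>s - t\<bar>"
proof -
  obtain r where "0 < r" and r: "\<And>s. norm (s - t) < r \<Longrightarrow> norm (f s - f t - (s - t) *\<^sub>R D) \<le> e * norm (s - t)"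
    using assms(1,3) unfolding has_vector_derivative_def has_derivative_within_alt by fastforce
  have "norm (f s - f t) \<le> (B + e) * \<bar>s - t\<bar>" if "\<bar>s - t\<bar> < r" for s
  proof -
    have "norm (f s - f t) \<le> norm (f s - f t - (s - t) *\<^sub>R D) + norm ((s - t) *\<^sub>R D)"
      using norm_triangle_ineq[of "f s - f t - (s - t) *\<^sub>R D" "(s - t) *\<^sub>R D"] by simp
    also have "\<dots> \<le> e * \<bar>s - t\<bar> + B * \<bar>s - t\<bar>"
      using r[of s] that mult_right_mono[OF assms(2), of "\<bar>s - t\<bar>"]
      by (intro add_mono) (simp_all add: mult.commute)
    finally show ?thesis by (simp add: algebra_simps)
  qed
  with \<open>0 < r\<close> show ?thesis using that by blast
qed

lemma lebesgue_null_set_open_cover: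
  assumes "N \<in> null_sets lebesgue" "0 < e"
  obtains G where "open G" "N \<subseteq> G" "G \<in> lmeasurable" "measure lebesgue G < e"
proof -
  obtain G where G: "open G" "N \<subseteq> G" "G - N \<in> lmeasurable" "emeasure lebesgue (G - N) < ennreal e"
    using sets_lebesgue_outer_open[of N e] assms by auto
  have N: "N \<in> lmeasurable" "measure lebesgue N = 0"
    using assms(1) by (auto simp: fmeasurableI_null_sets measure_eq_0_null_sets)
  have "G = (G - N) \<union> N"
    using G(2) by blast
  then have "G \<in> lmeasurable" "measure lebesgue G \<le> measure lebesgue (G - N) + measure lebesgue N"
    using G(3) N(1) by (metis fmeasurable.Un, metis fmeasurableD measure_Un_le)
  moreover have "measure lebesgue (G - N) < e"
    using G(3,4) by (metis emeasure_eq_measure2 ennreal_less_iff measure_nonneg)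
  ultimately show ?thesis
    using that G(1,2) N(2) by simp
qed

lemma norm_diff_le_of_local_bound:
  fixes f :: "real \<Rightarrow> 'a::real_normed_vector"
  assumes bound: "\<And>s. \<bar>s - x\<bar> < r \<Longrightarrow> norm (f s - f x) \<le> M * \<bar>s - x\<bar>"
    and x: "x \<in> {c..d}" and small: "{c..d} \<subseteq> ball x r"
  shows "norm (f d - f c) \<le> M * (d - c)"
proof -
  have "c \<in> {c..d}" "d \<in> {c..d}"
    using x by auto
  with small have "c \<in> ball x r" "d \<in> ball x r"
    by blast+
  then have "norm (f d - f x) \<le> M * (d - x)" "norm (f c - f x) \<le> M * (x - c)"
    using bound[of d] bound[of c] x by (auto simp: dist_real_def abs_minus_commute)
  moreover have "norm (f d - f c) \<le> norm (f d - f x) + norm (f c - f x)"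
    using norm_triangle_ineq4[of "f d - f x" "f c - f x"] by simp
  ultimately show ?thesis
    by (simp add: algebra_simps)
qed

lemma tagged_partial_division_increments_le:
  fixes f :: "real \<Rightarrow> 'a::real_normed_vector"
  assumes "a \<le> b" and p: "p tagged_partial_division_of {a..b}" and "0 \<le> M"
    and local: "\<And>x K. (x, K) \<in> p \<Longrightarrow>
      K \<subseteq> ball x (r x) \<and> (\<forall>s. \<bar>s - x\<bar> < r x \<longrightarrow> norm (f s - f x) \<le> M * \<bar>s - x\<bar>)"
  shows "(\<Sum>(x, K)\<in>p. norm (f (Sup K) - f (Inf K))) \<le> M * (b - a)"
proof -
  have "norm (f (Sup K) - f (Inf K)) \<le> M * measure lebesgue K" if xK: "(x, K) \<in> p" for x K
  proof -
    note K = tagged_partial_division_real_interval[OF p xK]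
    from K(1) local[OF xK] have "{Inf K..Sup K} \<subseteq> ball x (r x)"
      by simp
    with K(2,3) local[OF xK] have "norm (f (Sup K) - f (Inf K)) \<le> M * (Sup K - Inf K)"
      by (intro norm_diff_le_of_local_bound[where r = "r x"]) auto
    with K(5) show ?thesis
      by simp
  qed
  then have "(\<Sum>(x, K)\<in>p. norm (f (Sup K) - f (Inf K))) \<le> (\<Sum>(x, K)\<in>p. M * measure lebesgue K)"
    by (intro sum_mono) auto
  also have "\<dots> = M * measure lebesgue (\<Union>(snd ` p))"
    using content_tagged_partial_division[OF p] by (simp add: sum_distrib_left[symmetric] case_prod_unfold)
  also have "\<dots> \<le> M * measure lebesgue {a..b}"
  proof (intro mult_left_mono measure_mono_fmeasurable \<open>0 \<le> M\<close>)
    show "\<Union>(snd ` p) \<in> sets lebesgue"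
      using lmeasurable_division[OF division_of_tagged_division[OF tagged_partial_division_of_Union_self[OF p]]]
      by (rule fmeasurableD)
    show "\<Union>(snd ` p) \<subseteq> {a..b}"
      using tagged_partial_division_ofD(3)[OF p] by force
  qed simp
  also have "\<dots> = M * (b - a)"
    using \<open>a \<le> b\<close> by simp
  finally show ?thesis .
qed

lemma AE_derivative_bound_imp_local_bound:
  fixes f :: "real \<Rightarrow> 'a::real_normed_vector"
  assumes der: "AE t in lebesgue. t \<in> {a<..<b} \<longrightarrow> (\<exists>D. (f has_vector_derivative D) (at t) \<and> norm D \<le> B)"
    and "0 < e"
  obtains N r where "N \<in> null_sets lebesgue"
    "\<And>t. t \<in> {a..b} - N \<Longrightarrow> 0 < r t"
    "\<And>t s. t \<in> {a..b} - N \<Longrightarrow> \<bar>s - t\<bar> < r t \<Longrightarrow> norm (f s - f t) \<le> (B + e) * \<bar>s - t\<bar>"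
proof -
  obtain N0 where "{t \<in> space lebesgue. \<not> (t \<in> {a<..<b} \<longrightarrow>
      (\<exists>D. (f has_vector_derivative D) (at t) \<and> norm D \<le> B))} \<subseteq> N0"
    and "emeasure lebesgue N0 = 0" "N0 \<in> sets lebesgue"
    using der by (rule AE_E)
  then have N0: "N0 \<in> null_sets lebesgue"
    "\<And>t. t \<in> {a<..<b} \<Longrightarrow> t \<notin> N0 \<Longrightarrow> \<exists>D. (f has_vector_derivative D) (at t) \<and> norm D \<le> B"
    by auto
  \<comment> \<open>the endpoints are added since the derivative is only controlled on the open interval\<close>
  define N where "N = N0 \<union> {a, b}"
  have "N \<in> null_sets lebesgue"
    using N0(1) by (simp add: N_def negligible_iff_null_sets[symmetric] negligible_Un)
  moreover have "\<exists>r>0. \<forall>s. \<bar>s - t\<bar> < r \<longrightarrow> norm (f s - f t) \<le> (B + e) * \<bar>s - t\<bar>"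
    if t: "t \<in> {a..b} - N" for t
  proof -
    obtain D where "(f has_vector_derivative D) (at t)" "norm D \<le> B"
      using N0(2)[of t] t by (auto simp: N_def)
    then show ?thesis
      using has_vector_derivative_local_bound \<open>0 < e\<close> by metis
  qed
  then obtain r where "\<And>t. t \<in> {a..b} - N \<Longrightarrow> 0 < r t"
    "\<And>t s. t \<in> {a..b} - N \<Longrightarrow> \<bar>s - t\<bar> < r t \<Longrightarrow> norm (f s - f t) \<le> (B + e) * \<bar>s - t\<bar>"
    by metis
  ultimately show ?thesis
    using that by blast
qed

text \<open>Gauge argument: tags outside the null set of bad points get a ball on which the
  derivative bound holds, while the bad points are covered by an open set so small that
  absolute continuity controls the increments over the intervals tagged there.\<close>

lemma abs_cont_on_norm_diff_le_approx:
  fixes f :: "real \<Rightarrow> 'a::real_normed_vector"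
  assumes "a \<le> b" and f: "abs_cont_on {a..b} f" and "0 \<le> B" "0 < e"
    and der: "AE t in lebesgue. t \<in> {a<..<b} \<longrightarrow> (\<exists>D. (f has_vector_derivative D) (at t) \<and> norm D \<le> B)"
  shows "norm (f b - f a) \<le> (B + e) * (b - a) + e"
proof -
  obtain \<delta> where "0 < \<delta>" and \<delta>: "\<And>p. p tagged_partial_division_of {a..b} \<Longrightarrow>
      measure lebesgue (\<Union>(snd ` p)) < \<delta> \<Longrightarrow> (\<Sum>(x, K)\<in>p. norm (f (Sup K) - f (Inf K))) < e"
    using abs_cont_on_tagged_partial_division[OF f \<open>0 < e\<close>] by blast
  obtain N r where N: "N \<in> null_sets lebesgue" and r: "\<And>t. t \<in> {a..b} - N \<Longrightarrow> 0 < r t"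
    "\<And>t s. t \<in> {a..b} - N \<Longrightarrow> \<bar>s - t\<bar> < r t \<Longrightarrow> norm (f s - f t) \<le> (B + e) * \<bar>s - t\<bar>"
    using AE_derivative_bound_imp_local_bound[OF der \<open>0 < e\<close>] by metis
  obtain G where G: "open G" "N \<subseteq> G" "G \<in> lmeasurable" "measure lebesgue G < \<delta>"
    using lebesgue_null_set_open_cover[OF N \<open>0 < \<delta>\<close>] by blast
  define g where "g t = (if t \<in> N then G else ball t (if t \<in> {a..b} then r t else 1))" for t
  have "gauge g"
    unfolding gauge_def g_def using G(1,2) r(1) by auto
  then obtain p where p: "p tagged_division_of {a..b}" "g fine p"
    using fine_division_exists_real by blast
  have "finite p" and p_partial: "p tagged_partial_division_of {a..b}"
    using p(1) by (auto simp: tagged_division_of_def tagged_partial_division_of_def)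
  define p1 where "p1 = p - {xK. fst xK \<in> N}"
  define p2 where "p2 = p \<inter> {xK. fst xK \<in> N}"
  define h where "h K = norm (f (Sup K) - f (Inf K))" for K
  have "norm (f b - f a) = norm (\<Sum>(x, K)\<in>p. f (Sup K) - f (Inf K))"
    using additive_tagged_division_1[OF \<open>a \<le> b\<close> p(1), of f] by simp
  also have "\<dots> \<le> (\<Sum>(x, K)\<in>p. h K)"
    unfolding h_def by (rule order_trans[OF norm_sum]) (simp add: case_prod_unfold)
  also have "\<dots> = (\<Sum>(x, K)\<in>p1. h K) + (\<Sum>(x, K)\<in>p2. h K)"
    unfolding p1_def p2_def using sum.Int_Diff[OF \<open>finite p\<close>] by (metis add.commute)
  also have "(\<Sum>(x, K)\<in>p1. h K) \<le> (B + e) * (b - a)"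
    unfolding h_def
  proof (rule tagged_partial_division_increments_le)
    show "p1 tagged_partial_division_of {a..b}"
      using p_partial by (rule tagged_partial_division_subset) (auto simp: p1_def)
    fix x K assume "(x, K) \<in> p1"
    then have xK: "(x, K) \<in> p" "x \<in> {a..b} - N"
      using tagged_partial_division_ofD(2,3)[OF p_partial, of x K] by (auto simp: p1_def)
    have "K \<subseteq> g x"
      using p(2) xK(1) by (auto simp: fine_def)
    then show "K \<subseteq> ball x (r x) \<and> (\<forall>s. \<bar>s - x\<bar> < r x \<longrightarrow> norm (f s - f x) \<le> (B + e) * \<bar>s - x\<bar>)"
      using xK(2) r(2)[OF xK(2)] by (auto simp: g_def)
  qed (use \<open>a \<le> b\<close> \<open>0 \<le> B\<close> \<open>0 < e\<close> in simp_all)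
  also have "(\<Sum>(x, K)\<in>p2. h K) \<le> e"
  proof -
    have p2: "p2 tagged_partial_division_of {a..b}"
      using p_partial by (rule tagged_partial_division_subset) (auto simp: p2_def)
    have "\<Union>(snd ` p2) \<subseteq> G"
      using p(2) G(2) unfolding fine_def g_def p2_def by fastforce
    moreover have "\<Union>(snd ` p2) \<in> lmeasurable"
      using lmeasurable_division[OF division_of_tagged_division[OF tagged_partial_division_of_Union_self[OF p2]]] .
    ultimately have "measure lebesgue (\<Union>(snd ` p2)) < \<delta>"
      using G(3,4) by (meson fmeasurableD le_less_trans measure_mono_fmeasurable)
    then show ?thesis
      using \<delta>[OF p2] by (simp add: h_def)
  qed
  finally show ?thesis
    by simp
qed

lemma abs_cont_on_norm_diff_le:
  fixes f :: "real \<Rightarrow> 'a::real_normed_vector"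
  assumes "a \<le> b" "abs_cont_on {a..b} f" "0 \<le> B"
    and "AE t in lebesgue. t \<in> {a<..<b} \<longrightarrow> (\<exists>D. (f has_vector_derivative D) (at t) \<and> norm D \<le> B)"
  shows "norm (f b - f a) \<le> B * (b - a)"
proof (rule field_le_epsilon)
  fix e :: real assume "0 < e"
  define e' where "e' = e / (b - a + 1)"
  have "0 < e'"
    using \<open>0 < e\<close> \<open>a \<le> b\<close> by (simp add: e'_def)
  then have "norm (f b - f a) \<le> (B + e') * (b - a) + e'"
    using abs_cont_on_norm_diff_le_approx assms by blast
  also have "\<dots> = B * (b - a) + e' * (b - a + 1)"
    by (simp add: algebra_simps)
  also have "\<dots> = B * (b - a) + e"
    using \<open>a \<le> b\<close> by (simp add: e'_def)
  finally show "norm (f b - f a) \<le> B * (b - a) + e" .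
qed

lemma abs_cont_on_derivative_zero_imp_constant:
  fixes f :: "real \<Rightarrow> 'a::real_normed_vector"
  assumes f: "abs_cont_on {a..b} f"
    and der: "AE t in lebesgue. t \<in> {a<..<b} \<longrightarrow> (f has_vector_derivative 0) (at t)"
    and t: "t \<in> {a..b}"
  shows "f t = f a"
proof -
  have "norm (f t - f a) \<le> 0 * (t - a)"
  proof (rule abs_cont_on_norm_diff_le)
    show "abs_cont_on {a..t} f"
      using f by (rule abs_cont_on_subset) (use t in auto)
    show "AE s in lebesgue. s \<in> {a<..<t} \<longrightarrow> (\<exists>D. (f has_vector_derivative D) (at s) \<and> norm D \<le> 0)"
      using der by (rule eventually_mono) (use t in auto)
  qed (use t in auto)
  then show ?thesis by simp
qed

lemma AE_lebesgue_imp_ex_in_interval: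
  assumes "a < (b::real)" and "AE t in lebesgue. P t"
  obtains t where "t \<in> {a<..<b}" "P t"
proof -
  have "\<exists>t\<in>{a<..<b}. P t"
  proof (rule ccontr)
    assume "\<not> (\<exists>t\<in>{a<..<b}. P t)"
    with assms(2) have "AE t in lebesgue. t \<notin> {a<..<b}"
      by (auto elim: eventually_mono)
    then have "{a<..<b} \<in> null_sets lebesgue"
      by (subst AE_iff_null_sets) auto
    then show False
      using assms(1) by (simp add: null_sets_def)
  qed
  with that show ?thesis by blast
qed

lemma continuous_on_AE_eq_imp_eq:
  fixes f :: "real \<Rightarrow> 'a::metric_space"
  assumes "a < b" and cont: "continuous_on {a..b} f"
    and ae: "AE t in lebesgue. t \<in> {a..b} \<longrightarrow> f t = c" and s: "s \<in> {a..b}"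
  shows "f s = c"
proof (rule ccontr)
  assume "f s \<noteq> c"
  then obtain d where "0 < d" and d: "\<And>t. t \<in> {a..b} \<Longrightarrow> dist t s < d \<Longrightarrow> dist (f t) (f s) < dist c (f s)"
    using cont s unfolding continuous_on_iff by (metis zero_less_dist_iff)
  have "max a (s - d / 2) < min b (s + d / 2)"
    using s \<open>a < b\<close> \<open>0 < d\<close> by auto
  then obtain t where t: "t \<in> {max a (s - d / 2)<..<min b (s + d / 2)}" "t \<in> {a..b} \<longrightarrow> f t = c"
    using ae by (rule AE_lebesgue_imp_ex_in_interval)
  then have "t \<in> {a..b}" "dist t s < d"
    using \<open>0 < d\<close> by (auto simp: dist_real_def)
  with d t(2) show False by force
qed

lemma has_vector_derivative_locally_constant:
  assumes "(f has_vector_derivative D) (at t)" "open S" "t \<in> S" "\<And>s. s \<in> S \<Longrightarrow> f s = c"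
  shows "D = 0"
proof -
  have "(f has_vector_derivative 0) (at t)"
    by (rule has_vector_derivative_transform_within_open[of "\<lambda>s. c" _ _ S]) (use assms in auto)
  with assms(1) show ?thesis
    by (rule vector_derivative_unique_at)
qed

section \<open>Extremals of the structure\<close>

lemma X_1_eq: "X 1 p = (1, 0, - fst (snd p) / 2)"
  by (cases p) (simp add: X_def)

lemma X_2_eq: "X 2 p = (0, 1, fst p / 2)"
  by (cases p) (simp add: X_def)

lemma frechet_derivative_X_1: "frechet_derivative (X 1) (at p) = (\<lambda>v. (0, 0, - fst (snd v) / 2))"
proof -
  have "(X 1 has_derivative (\<lambda>v. (0, 0, - fst (snd v) / 2))) (at p)"
    unfolding X_1_eq[abs_def] by (auto intro!: derivative_eq_intros)
  then show ?thesis
    by (rule frechet_derivative_at[symmetric])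
qed

lemma frechet_derivative_X_2: "frechet_derivative (X 2) (at p) = (\<lambda>v. (0, 0, fst v / 2))"
proof -
  have "(X 2 has_derivative (\<lambda>v. (0, 0, fst v / 2))) (at p)"
    unfolding X_2_eq[abs_def] by (auto intro!: derivative_eq_intros)
  then show ?thesis
    by (rule frechet_derivative_at[symmetric])
qed

lemma phi_1_eq: "phi lam \<gamma> 1 t = fst (lam t) - snd (snd (lam t)) * fst (snd (\<gamma> t)) / 2"
  unfolding phi_def X_1_eq by (simp add: inner_prod_def)

lemma phi_2_eq: "phi lam \<gamma> 2 t = fst (snd (lam t)) + snd (snd (lam t)) * fst (\<gamma> t) / 2"
  unfolding phi_def X_2_eq by (simp add: inner_prod_def)

text \<open>Expanding these sums by \<open>simp\<close> would rewrite the index \<open>1\<close> to \<open>Suc 0\<close>, after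
  which \<open>X_1_eq\<close> and \<open>phi_1_eq\<close> no longer apply; so they are unfolded first.\<close>

lemma sum_1_2: "(\<Sum>i\<in>{1::nat, 2}. g i) = g 1 + g 2"
  by simp

lemma sum_1_2_swap: "j \<in> {1, 2} \<Longrightarrow> (\<Sum>i\<in>{1::nat, 2}. g i) = g j + g (3 - j)"
  by (auto simp: add.commute)

definition horizontal_coord :: "nat \<Rightarrow> pt \<Rightarrow> real" where
  "horizontal_coord i p = (if i = 1 then fst p else fst (snd p))"

lemma bounded_linear_horizontal_coord: "bounded_linear (horizontal_coord i)"
proof -
  have "horizontal_coord i = (if i = 1 then fst else (\<lambda>p. fst (snd p)))"
    by (simp add: horizontal_coord_def fun_eq_iff)
  then show ?thesis
    by (auto intro!: bounded_linear_intros)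
qed

lemma admissible_velocity:
  assumes "admissible T \<gamma> u"
  shows "AE t in lebesgue. t \<in> {0..T} \<longrightarrow> \<bar>u 1 t\<bar> \<le> 1 \<and> \<bar>u 2 t\<bar> \<le> 1 \<and>
    (\<gamma> has_vector_derivative (u 1 t, u 2 t, (u 2 t * fst (\<gamma> t) - u 1 t * fst (snd (\<gamma> t))) / 2)) (at t)"
proof -
  have "(\<Sum>i\<in>{1::nat, 2}. u i t *\<^sub>R X i (\<gamma> t)) = (u 1 t, u 2 t, (u 2 t * fst (\<gamma> t) - u 1 t * fst (snd (\<gamma> t))) / 2)"
    for t unfolding sum_1_2 X_1_eq X_2_eq by (simp add: algebra_simps diff_divide_distrib)
  with assms show ?thesis
    unfolding admissible_def by (auto elim!: eventually_mono)
qed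

lemma admissible_horizontal_coord_derivative:
  assumes "admissible T \<gamma> u" "i \<in> {1, 2}"
  shows "AE t in lebesgue. t \<in> {0..T} \<longrightarrow>
    \<bar>u i t\<bar> \<le> 1 \<and> ((\<lambda>s. horizontal_coord i (\<gamma> s)) has_vector_derivative u i t) (at t)"
  using admissible_velocity[OF assms(1)]
proof (rule eventually_mono, intro impI)
  fix t assume "t \<in> {0..T} \<longrightarrow> \<bar>u 1 t\<bar> \<le> 1 \<and> \<bar>u 2 t\<bar> \<le> 1 \<and>
    (\<gamma> has_vector_derivative (u 1 t, u 2 t, (u 2 t * fst (\<gamma> t) - u 1 t * fst (snd (\<gamma> t))) / 2)) (at t)"
    and "t \<in> {0..T}"
  then show "\<bar>u i t\<bar> \<le> 1 \<and> ((\<lambda>s. horizontal_coord i (\<gamma> s)) has_vector_derivative u i t) (at t)"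
    using bounded_linear.has_vector_derivative[OF bounded_linear_horizontal_coord, of \<gamma> _ "at t" i] assms(2)
    by (auto simp: horizontal_coord_def[of _ "(_, _)"])
qed

lemma extremal_pair_adjoint:
  assumes "extremal_pair T lam \<gamma> u"
  shows "AE t in lebesgue. t \<in> {0..T} \<longrightarrow>
    (lam has_vector_derivative (- u 2 t * snd (snd (lam t)) / 2, u 1 t * snd (snd (lam t)) / 2, 0)) (at t)"
proof -
  have adjoint: "\<mu> = (- u 2 t * snd (snd (lam t)) / 2, u 1 t * snd (snd (lam t)) / 2, 0)"
    if "\<forall>v. inner \<mu> v = - (\<Sum>i\<in>{1,2}. u i t * inner (lam t) (frechet_derivative (X i) (at (\<gamma> t)) v))"
    for \<mu> t
  proof (rule vector_eq_rdot[THEN iffD1], rule allI)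
    fix v :: pt
    show "inner \<mu> v = inner (- u 2 t * snd (snd (lam t)) / 2, u 1 t * snd (snd (lam t)) / 2, 0) v"
      using that[rule_format, of v] unfolding sum_1_2 frechet_derivative_X_1 frechet_derivative_X_2
      by (simp add: inner_prod_def algebra_simps)
  qed
  from assms have "AE t in lebesgue. t \<in> {0..T} \<longrightarrow> (\<exists>\<mu>. (lam has_vector_derivative \<mu>) (at t) \<and>
      (\<forall>v. inner \<mu> v = - (\<Sum>i\<in>{1,2}. u i t * inner (lam t) (frechet_derivative (X i) (at (\<gamma> t)) v))))"
    unfolding extremal_pair_def by blast
  then show ?thesis
    by (rule eventually_mono) (use adjoint in blast)
qed

lemma extremal_pair_vertical_covector_constant:
  assumes E: "extremal_pair T lam \<gamma> u" and t: "t \<in> {0..T}"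
  shows "snd (snd (lam t)) = snd (snd (lam 0))"
proof (rule abs_cont_on_derivative_zero_imp_constant[OF _ _ t])
  have vertical: "bounded_linear (\<lambda>p::pt. snd (snd p))"
    by (auto intro!: bounded_linear_intros)
  have "abs_cont_on {0..T} lam"
    using E by (simp add: extremal_pair_def)
  then show "abs_cont_on {0..T} (\<lambda>s. snd (snd (lam s)))"
    using vertical by (rule abs_cont_on_bounded_linear)
  show "AE t in lebesgue. t \<in> {0<..<T} \<longrightarrow> ((\<lambda>s. snd (snd (lam s))) has_vector_derivative 0) (at t)"
    using extremal_pair_adjoint[OF E]
    by (rule eventually_mono) (auto dest: bounded_linear.has_vector_derivative[OF vertical])
qed

text \<open>Along an extremal the vertical component \<open>k\<close> of \<open>\<lambda>\<close> is constant, and then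
  \<open>\<lambda> + (k/2)(y, -x, 0)\<close> has zero derivative.\<close>

lemma extremal_pair_covector:
  assumes E: "extremal_pair T lam \<gamma> u"
  obtains C :: "nat \<Rightarrow> real" and k where
    "\<And>t. t \<in> {0..T} \<Longrightarrow> lam t = (C 1 - k / 2 * fst (snd (\<gamma> t)), C 2 + k / 2 * fst (\<gamma> t), k)"
proof -
  have \<gamma>: "abs_cont_on {0..T} \<gamma>" and lam: "abs_cont_on {0..T} lam"
    using E by (auto simp: extremal_pair_def admissible_def)
  define k where "k = snd (snd (lam 0))"
  have vertical: "snd (snd (lam t)) = k" if "t \<in> {0..T}" for t
    unfolding k_def using E that by (rule extremal_pair_vertical_covector_constant)
  define L :: "pt \<Rightarrow> pt" where "L p = (k / 2) *\<^sub>R (fst (snd p), - fst p, 0)" for p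
  have L: "bounded_linear L"
    unfolding L_def
    by (intro bounded_linear_compose[OF bounded_linear_scaleR_right])
      (auto intro!: bounded_linear_intros bounded_linear_minus)
  define q where "q t = lam t + L (\<gamma> t)" for t
  have "q t = q 0" if "t \<in> {0..T}" for t
  proof (rule abs_cont_on_derivative_zero_imp_constant[OF _ _ that])
    show "abs_cont_on {0..T} q"
      unfolding q_def by (intro abs_cont_on_add lam abs_cont_on_bounded_linear[OF \<gamma> L])
    have q_deriv: "(q has_vector_derivative 0) (at t)"
      if "(lam has_vector_derivative (- u 2 t * snd (snd (lam t)) / 2, u 1 t * snd (snd (lam t)) / 2, 0)) (at t)"
        "(\<gamma> has_vector_derivative (u 1 t, u 2 t, w)) (at t)" "t \<in> {0..T}" for t w
    proof -
      have "(q has_vector_derivative (- u 2 t * k / 2, u 1 t * k / 2, 0) + L (u 1 t, u 2 t, w)) (at t)"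
        unfolding q_def using that vertical[OF that(3)]
        by (intro has_vector_derivative_add bounded_linear.has_vector_derivative[OF L]) auto
      then show ?thesis
        by (simp add: L_def zero_prod_def)
    qed
    have "admissible T \<gamma> u"
      using E by (simp add: extremal_pair_def)
    from eventually_conj[OF extremal_pair_adjoint[OF E] admissible_velocity[OF this]]
    show "AE t in lebesgue. t \<in> {0<..<T} \<longrightarrow> (q has_vector_derivative 0) (at t)"
      by (rule eventually_mono) (auto intro: q_deriv)
  qed
  then have "lam t = q 0 - L (\<gamma> t)" if "t \<in> {0..T}" for t
    using that unfolding q_def by (metis add_diff_cancel_right')
  moreover have "snd (snd (q 0)) = k"
    by (simp add: q_def L_def k_def)
  ultimately show ?thesis
    by (intro that[of "\<lambda>i. if i = 1 then fst (q 0) else fst (snd (q 0))" k]) (simp add: L_def prod_eq_iff)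
qed

lemma extremal_pair_switching_functions:
  assumes "extremal_pair T lam \<gamma> u"
  obtains C :: "nat \<Rightarrow> real" and k where
    "\<And>t. t \<in> {0..T} \<Longrightarrow> lam t = (C 1 - k / 2 * fst (snd (\<gamma> t)), C 2 + k / 2 * fst (\<gamma> t), k)"
    "\<And>j t. j \<in> {1, 2} \<Longrightarrow> t \<in> {0..T} \<Longrightarrow>
       phi lam \<gamma> j t = C j + (if j = 1 then - k else k) * horizontal_coord (3 - j) (\<gamma> t)"
proof -
  obtain C :: "nat \<Rightarrow> real" and k where
    lam: "\<And>t. t \<in> {0..T} \<Longrightarrow> lam t = (C 1 - k / 2 * fst (snd (\<gamma> t)), C 2 + k / 2 * fst (\<gamma> t), k)"
    using extremal_pair_covector[OF assms] by blast
  moreover have "phi lam \<gamma> j t = C j + (if j = 1 then - k else k) * horizontal_coord (3 - j) (\<gamma> t)"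
    if "j \<in> {1, 2}" "t \<in> {0..T}" for j t
  proof -
    from that(1) consider "j = 1" | "j = 2"
      by blast
    then show ?thesis
    proof cases
      case 1
      show ?thesis
        unfolding 1 phi_1_eq lam[OF that(2)] by (simp add: horizontal_coord_def algebra_simps)
    next
      case 2
      show ?thesis
        unfolding 2 phi_2_eq lam[OF that(2)] by (simp add: horizontal_coord_def algebra_simps)
    qed
  qed
  ultimately show ?thesis
    using that by blast
qed

lemma admissible_horizontal_coord_constant_imp_control_zero:
  assumes adm: "admissible T \<gamma> u" and i: "i \<in> {1, 2}"
    and const: "\<And>s. s \<in> {0..T} \<Longrightarrow> horizontal_coord i (\<gamma> s) = c"
  shows "AE s in lebesgue. s \<in> {0<..<T} \<longrightarrow> u i s = 0"
  using admissible_horizontal_coord_derivative[OF adm i]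
proof (rule eventually_mono, intro impI)
  fix s assume "s \<in> {0..T} \<longrightarrow>
    \<bar>u i s\<bar> \<le> 1 \<and> ((\<lambda>s. horizontal_coord i (\<gamma> s)) has_vector_derivative u i s) (at s)"
    and s: "s \<in> {0<..<T}"
  then have "((\<lambda>s. horizontal_coord i (\<gamma> s)) has_vector_derivative u i s) (at s)"
    by auto
  then show "u i s = 0"
    by (rule has_vector_derivative_locally_constant[OF _ open_greaterThanLessThan s]) (use const in auto)
qed

lemma extremal_pair_switching_functions_zero_imp_constant:
  assumes E: "extremal_pair T lam \<gamma> u" and "0 < T" and "snd (snd (lam 0)) \<noteq> 0"
    and zero: "AE t in lebesgue. t \<in> {0..T} \<longrightarrow> phi lam \<gamma> 1 t = 0 \<and> phi lam \<gamma> 2 t = 0"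
    and t: "t \<in> {0..T}"
  shows "\<gamma> t = \<gamma> 0"
proof -
  have adm: "admissible T \<gamma> u"
    using E by (simp add: extremal_pair_def)
  then have \<gamma>: "abs_cont_on {0..T} \<gamma>"
    by (simp add: admissible_def)
  obtain C :: "nat \<Rightarrow> real" and k where
    lam: "\<And>t. t \<in> {0..T} \<Longrightarrow> lam t = (C 1 - k / 2 * fst (snd (\<gamma> t)), C 2 + k / 2 * fst (\<gamma> t), k)"
    and phi: "\<And>j t. j \<in> {1, 2} \<Longrightarrow> t \<in> {0..T} \<Longrightarrow>
       phi lam \<gamma> j t = C j + (if j = 1 then - k else k) * horizontal_coord (3 - j) (\<gamma> t)"
    using extremal_pair_switching_functions[OF E] by metis
  have "k \<noteq> 0"
    using lam[of 0] \<open>0 < T\<close> assms(3) by simp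
  have frozen: "AE s in lebesgue. s \<in> {0<..<T} \<longrightarrow> u (3 - j) s = 0" if j: "j \<in> {1, 2}" for j
  proof -
    define \<sigma> where "\<sigma> = (if j = 1 then - k else k)"
    have "\<sigma> \<noteq> 0"
      using \<open>k \<noteq> 0\<close> by (simp add: \<sigma>_def)
    have "AE s in lebesgue. s \<in> {0..T} \<longrightarrow> horizontal_coord (3 - j) (\<gamma> s) = - C j / \<sigma>"
      using zero
    proof (rule eventually_mono, intro impI)
      fix s assume "s \<in> {0..T} \<longrightarrow> phi lam \<gamma> 1 s = 0 \<and> phi lam \<gamma> 2 s = 0" "s \<in> {0..T}"
      then have "C j + \<sigma> * horizontal_coord (3 - j) (\<gamma> s) = 0"
        using phi[OF j] j by (auto simp: \<sigma>_def)
      with \<open>\<sigma> \<noteq> 0\<close> show "horizontal_coord (3 - j) (\<gamma> s) = - C j / \<sigma>"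
        by (simp add: field_simps)
    qed
    moreover have "continuous_on {0..T} (\<lambda>s. horizontal_coord (3 - j) (\<gamma> s))"
      by (intro abs_cont_on_imp_continuous_on abs_cont_on_bounded_linear[OF \<gamma>]
          bounded_linear_horizontal_coord)
    ultimately have "horizontal_coord (3 - j) (\<gamma> s) = - C j / \<sigma>" if "s \<in> {0..T}" for s
      using continuous_on_AE_eq_imp_eq[OF \<open>0 < T\<close>] that by blast
    moreover have "3 - j \<in> {1, 2}"
      using j by auto
    ultimately show ?thesis
      using admissible_horizontal_coord_constant_imp_control_zero[OF adm] by blast
  qed
  have "AE s in lebesgue. s \<in> {0<..<T} \<longrightarrow> u 1 s = 0 \<and> u 2 s = 0"
    using eventually_conj[OF frozen[of 2] frozen[of 1]] by auto
  with admissible_velocity[OF adm]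
  have "AE s in lebesgue. s \<in> {0<..<T} \<longrightarrow> (\<gamma> has_vector_derivative 0) (at s)"
    by eventually_elim (auto simp: zero_prod_def)
  then show ?thesis
    using abs_cont_on_derivative_zero_imp_constant[OF \<gamma> _ t] by blast
qed

lemma mult_eq_abs_imp_eq_sgn:
  fixes c v :: real
  assumes "c \<noteq> 0" "v * c = \<bar>c\<bar>"
  shows "v = sgn c"
proof -
  have "v = \<bar>c\<bar> / c"
    using assms by (simp add: field_simps)
  with \<open>c \<noteq> 0\<close> show ?thesis
    by (auto simp: sgn_if abs_if)
qed

lemma extremal_pair_maximum_condition:
  assumes "extremal_pair T lam \<gamma> u" "j \<in> {1, 2}"
  obtains lam0 where "AE t in lebesgue. t \<in> {0..T} \<longrightarrow>
      u j t * phi lam \<gamma> j t + u (3 - j) t * phi lam \<gamma> (3 - j) t = lam0 \<and>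
      \<bar>phi lam \<gamma> j t\<bar> + \<bar>phi lam \<gamma> (3 - j) t\<bar> = lam0"
  using assms unfolding extremal_pair_def sum_1_2_swap[OF assms(2)] by blast

lemma singular_arc_imp_vertical_covector_zero:
  assumes E: "extremal_pair T lam \<gamma> u" and nonconstant: "\<exists>s\<in>{0..T}. \<exists>t\<in>{0..T}. \<gamma> s \<noteq> \<gamma> t"
    and j: "j \<in> {1, 2}" and ab: "0 \<le> a" "a < b" "b \<le> T"
    and singular: "\<forall>t\<in>{a<..<b}. phi lam \<gamma> j t = 0"
  shows "snd (snd (lam 0)) = 0"
proof (rule ccontr)
  assume k: "snd (snd (lam 0)) \<noteq> 0"
  have adm: "admissible T \<gamma> u"
    using E by (simp add: extremal_pair_def)
  obtain C :: "nat \<Rightarrow> real" and k where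
    lam: "\<And>t. t \<in> {0..T} \<Longrightarrow> lam t = (C 1 - k / 2 * fst (snd (\<gamma> t)), C 2 + k / 2 * fst (\<gamma> t), k)"
    and phi: "\<And>j t. j \<in> {1, 2} \<Longrightarrow> t \<in> {0..T} \<Longrightarrow>
       phi lam \<gamma> j t = C j + (if j = 1 then - k else k) * horizontal_coord (3 - j) (\<gamma> t)"
    using extremal_pair_switching_functions[OF E] by metis
  obtain lam0 where pmp: "AE t in lebesgue. t \<in> {0..T} \<longrightarrow>
      u j t * phi lam \<gamma> j t + u (3 - j) t * phi lam \<gamma> (3 - j) t = lam0 \<and>
      \<bar>phi lam \<gamma> j t\<bar> + \<bar>phi lam \<gamma> (3 - j) t\<bar> = lam0"
    using extremal_pair_maximum_condition[OF E j] by blast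
  define \<sigma> where "\<sigma> = (if j = 1 then - k else k)"
  have "\<sigma> \<noteq> 0"
    using k lam[of 0] ab by (simp add: \<sigma>_def)
  have frozen: "horizontal_coord (3 - j) (\<gamma> s) = - C j / \<sigma>" if "s \<in> {a<..<b}" for s
  proof -
    have "C j + \<sigma> * horizontal_coord (3 - j) (\<gamma> s) = 0"
      using singular phi[OF j, of s] that ab by (simp add: \<sigma>_def)
    with \<open>\<sigma> \<noteq> 0\<close> show ?thesis
      by (simp add: field_simps)
  qed
  have "3 - j \<in> {1, 2}"
    using j by auto
  obtain t where t: "t \<in> {a<..<b}" and
    "t \<in> {0..T} \<longrightarrow> \<bar>u (3 - j) t\<bar> \<le> 1 \<and>
       ((\<lambda>s. horizontal_coord (3 - j) (\<gamma> s)) has_vector_derivative u (3 - j) t) (at t)"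
    and pmp_t: "t \<in> {0..T} \<longrightarrow>
       u j t * phi lam \<gamma> j t + u (3 - j) t * phi lam \<gamma> (3 - j) t = lam0 \<and>
       \<bar>phi lam \<gamma> j t\<bar> + \<bar>phi lam \<gamma> (3 - j) t\<bar> = lam0"
    using AE_lebesgue_imp_ex_in_interval[OF ab(2)
        eventually_conj[OF admissible_horizontal_coord_derivative[OF adm \<open>3 - j \<in> {1, 2}\<close>] pmp]] by blast
  moreover have "t \<in> {0..T}"
    using t ab by auto
  ultimately have "((\<lambda>s. horizontal_coord (3 - j) (\<gamma> s)) has_vector_derivative u (3 - j) t) (at t)"
    by blast
  then have "u (3 - j) t = 0"
    by (rule has_vector_derivative_locally_constant[OF _ open_greaterThanLessThan t frozen])
  then have "lam0 = 0"
    using pmp_t \<open>t \<in> {0..T}\<close> singular t by simp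
  then have "AE s in lebesgue. s \<in> {0..T} \<longrightarrow> phi lam \<gamma> 1 s = 0 \<and> phi lam \<gamma> 2 s = 0"
    using pmp j by (auto elim!: eventually_mono)
  then have "\<gamma> s = \<gamma> 0" if "s \<in> {0..T}" for s
    using extremal_pair_switching_functions_zero_imp_constant[OF E _ k _ that] ab by simp
  with nonconstant show False
    by metis
qed

lemma singular_arc_global:
  assumes E: "extremal_pair T lam \<gamma> u" and nonconstant: "\<exists>s\<in>{0..T}. \<exists>t\<in>{0..T}. \<gamma> s \<noteq> \<gamma> t"
    and j: "j \<in> {1, 2}" and ab: "0 \<le> a" "a < b" "b \<le> T"
    and singular: "\<forall>t\<in>{a<..<b}. phi lam \<gamma> j t = 0"
  shows "(\<forall>t\<in>{0..T}. phi lam \<gamma> j t = 0) \<and> (\<exists>c\<in>{1, -1}. AE t in lebesgue. t \<in> {0..T} \<longrightarrow> u (3 - j) t = c)"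
proof -
  have j': "3 - j \<in> {1, 2}"
    using j by auto
  obtain C :: "nat \<Rightarrow> real" and k where
    lam: "\<And>t. t \<in> {0..T} \<Longrightarrow> lam t = (C 1 - k / 2 * fst (snd (\<gamma> t)), C 2 + k / 2 * fst (\<gamma> t), k)"
    and phi: "\<And>j t. j \<in> {1, 2} \<Longrightarrow> t \<in> {0..T} \<Longrightarrow>
       phi lam \<gamma> j t = C j + (if j = 1 then - k else k) * horizontal_coord (3 - j) (\<gamma> t)"
    using extremal_pair_switching_functions[OF E] by metis
  have "k = 0"
    using singular_arc_imp_vertical_covector_zero[OF assms] lam[of 0] ab by simp
  then have phi_const: "phi lam \<gamma> i t = C i" if "i \<in> {1, 2}" "t \<in> {0..T}" for i t
    using phi[OF that] by simp
  have "C j = 0"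
    using singular phi_const[OF j, of "(a + b) / 2"] ab by simp
  have "lam 0 = (C 1, C 2, 0)"
    using lam[of 0] ab \<open>k = 0\<close> by simp
  moreover have "lam 0 \<noteq> 0"
    using E ab by (simp add: extremal_pair_def)
  ultimately have "C (3 - j) \<noteq> 0"
    using j \<open>C j = 0\<close> by (auto simp: zero_prod_def)
  obtain lam0 where "AE t in lebesgue. t \<in> {0..T} \<longrightarrow>
      u j t * phi lam \<gamma> j t + u (3 - j) t * phi lam \<gamma> (3 - j) t = lam0 \<and>
      \<bar>phi lam \<gamma> j t\<bar> + \<bar>phi lam \<gamma> (3 - j) t\<bar> = lam0"
    using extremal_pair_maximum_condition[OF E j] by blast
  then have "AE t in lebesgue. t \<in> {0..T} \<longrightarrow> u (3 - j) t = sgn (C (3 - j))"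
  proof (rule eventually_mono, intro impI)
    fix t assume "t \<in> {0..T} \<longrightarrow>
      u j t * phi lam \<gamma> j t + u (3 - j) t * phi lam \<gamma> (3 - j) t = lam0 \<and>
      \<bar>phi lam \<gamma> j t\<bar> + \<bar>phi lam \<gamma> (3 - j) t\<bar> = lam0" and t: "t \<in> {0..T}"
    then have "u (3 - j) t * C (3 - j) = \<bar>C (3 - j)\<bar>"
      using phi_const[OF j t] phi_const[OF j' t] \<open>C j = 0\<close> by simp
    with \<open>C (3 - j) \<noteq> 0\<close> show "u (3 - j) t = sgn (C (3 - j))"
      by (rule mult_eq_abs_imp_eq_sgn)
  qed
  moreover have "sgn (C (3 - j)) \<in> {1, -1}"
    using \<open>C (3 - j) \<noteq> 0\<close> by (auto simp: sgn_if)
  moreover have "\<forall>t\<in>{0..T}. phi lam \<gamma> j t = 0"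
    using phi_const[OF j] \<open>C j = 0\<close> by simp
  ultimately show ?thesis
    by blast
qed

section \<open>Saturated controls\<close>

lemma phi_horizontal_covector:
  "phi (\<lambda>t. (p1, p2, 0)) \<gamma> 1 t = p1" "phi (\<lambda>t. (p1, p2, 0)) \<gamma> 2 t = p2"
  unfolding phi_1_eq phi_2_eq by simp_all

lemma extremal_pair_horizontal_covector:
  assumes adm: "admissible T \<gamma> u" and "(p1, p2) \<noteq> (0, 0)"
    and max: "AE t in lebesgue. t \<in> {0..T} \<longrightarrow> u 1 t * p1 + u 2 t * p2 = \<bar>p1\<bar> + \<bar>p2\<bar>"
  shows "extremal_pair T (\<lambda>t. (p1, p2, 0)) \<gamma> u"
  unfolding extremal_pair_def
proof (intro conjI)
  show "\<forall>t\<in>{0..T}. (p1, p2, 0::real) \<noteq> 0"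
    using assms(2) by (simp add: zero_prod_def)
  have "inner 0 v = - (\<Sum>i\<in>{1,2}. u i t * inner (p1, p2, 0::real) (frechet_derivative (X i) (at (\<gamma> t)) v))"
    for t v unfolding sum_1_2 frechet_derivative_X_1 frechet_derivative_X_2 by (simp add: inner_prod_def)
  then show "AE t in lebesgue. t \<in> {0..T} \<longrightarrow> (\<exists>\<mu>. ((\<lambda>t. (p1, p2, 0::real)) has_vector_derivative \<mu>) (at t) \<and>
      (\<forall>v. inner \<mu> v = - (\<Sum>i\<in>{1,2}. u i t * inner (p1, p2, 0::real) (frechet_derivative (X i) (at (\<gamma> t)) v))))"
    by (intro always_eventually allI impI exI[of _ 0] conjI) auto
  show "\<exists>lam0\<ge>0. AE t in lebesgue. t \<in> {0..T} \<longrightarrow>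
      (\<Sum>i\<in>{1,2}. u i t * phi (\<lambda>t. (p1, p2, 0)) \<gamma> i t) = lam0 \<and>
      (\<Sum>i\<in>{1,2}. \<bar>phi (\<lambda>t. (p1, p2, 0)) \<gamma> i t\<bar>) = lam0"
    using max unfolding sum_1_2 phi_horizontal_covector by (intro exI[of _ "\<bar>p1\<bar> + \<bar>p2\<bar>"]) auto
qed (use adm abs_cont_on_const in auto)

lemma saturated_control_extremal_lift:
  assumes adm: "admissible T \<gamma> u" and i: "i \<in> {1, 2}" and c: "c \<in> {1, -1}"
    and sat: "AE t in lebesgue. t \<in> {0..T} \<longrightarrow> u i t = c"
  shows "\<exists>lam. extremal_pair T lam \<gamma> u \<and> (\<forall>t\<in>{0..T}. phi lam \<gamma> (3 - i) t = 0)"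
proof -
  define p1 where "p1 = (if i = 1 then c else 0)"
  define p2 where "p2 = (if i = 1 then 0 else c)"
  have "extremal_pair T (\<lambda>t. (p1, p2, 0)) \<gamma> u"
  proof (rule extremal_pair_horizontal_covector[OF adm])
    show "(p1, p2) \<noteq> (0, 0)"
      using c by (auto simp: p1_def p2_def)
    show "AE t in lebesgue. t \<in> {0..T} \<longrightarrow> u 1 t * p1 + u 2 t * p2 = \<bar>p1\<bar> + \<bar>p2\<bar>"
      using sat by (rule eventually_mono) (use i c in \<open>auto simp: p1_def p2_def\<close>)
  qed
  moreover have "phi (\<lambda>t. (p1, p2, 0)) \<gamma> (3 - i) t = 0" for t
  proof (cases "i = 1")
    case True
    then have "3 - i = 2"
      by simp
    with True show ?thesis
      by (simp add: phi_horizontal_covector p2_def)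
  next
    case False
    then have "3 - i = 1"
      using i by simp
    with False show ?thesis
      by (simp only: phi_horizontal_covector p1_def if_False)
  qed
  ultimately show ?thesis
    by blast
qed

lemma admissible_horizontal_displacement_le:
  assumes adm: "admissible T \<gamma> u" and i: "i \<in> {1, 2}"
  shows "\<bar>horizontal_coord i (\<gamma> T) - horizontal_coord i (\<gamma> 0)\<bar> \<le> T"
proof -
  have "0 \<le> T" and \<gamma>: "abs_cont_on {0..T} \<gamma>"
    using adm by (auto simp: admissible_def)
  have "norm (horizontal_coord i (\<gamma> T) - horizontal_coord i (\<gamma> 0)) \<le> 1 * (T - 0)"
    using \<open>0 \<le> T\<close> abs_cont_on_bounded_linear[OF \<gamma> bounded_linear_horizontal_coord]
  proof (rule abs_cont_on_norm_diff_le)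
    show "AE t in lebesgue. t \<in> {0<..<T} \<longrightarrow>
        (\<exists>D. ((\<lambda>s. horizontal_coord i (\<gamma> s)) has_vector_derivative D) (at t) \<and> norm D \<le> 1)"
      using admissible_horizontal_coord_derivative[OF adm i] by (rule eventually_mono) auto
  qed simp
  then show ?thesis
    by simp
qed

lemma admissible_horizontal_displacement_eq:
  assumes adm: "admissible T \<gamma> u" and i: "i \<in> {1, 2}"
    and sat: "AE t in lebesgue. t \<in> {0..T} \<longrightarrow> u i t = c"
  shows "horizontal_coord i (\<gamma> T) - horizontal_coord i (\<gamma> 0) = c * T"
proof -
  have "0 \<le> T" and \<gamma>: "abs_cont_on {0..T} \<gamma>"
    using adm by (auto simp: admissible_def)
  define g where "g s = horizontal_coord i (\<gamma> s) + (- c) * s" for s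
  have "g T = g 0"
  proof (rule abs_cont_on_derivative_zero_imp_constant[where f = g and a = 0 and b = T])
    show "abs_cont_on {0..T} g"
      unfolding g_def
      by (intro abs_cont_on_add abs_cont_on_bounded_linear[OF \<gamma> bounded_linear_horizontal_coord]
          abs_cont_on_bounded_linear[OF abs_cont_on_ident bounded_linear_mult_right])
    have g_deriv: "(g has_vector_derivative 0) (at t)"
      if "((\<lambda>s. horizontal_coord i (\<gamma> s)) has_vector_derivative c) (at t)" for t
    proof -
      have "(g has_vector_derivative c + (- c) * 1) (at t)"
        unfolding g_def
        by (intro has_vector_derivative_add that
            bounded_linear.has_vector_derivative[OF bounded_linear_mult_right has_vector_derivative_id])
      then show ?thesis
        by simp
    qed
    from admissible_horizontal_coord_derivative[OF adm i] sat
    show "AE t in lebesgue. t \<in> {0<..<T} \<longrightarrow> (g has_vector_derivative 0) (at t)"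
      by eventually_elim (auto intro: g_deriv)
  qed (use \<open>0 \<le> T\<close> in simp)
  then show ?thesis
    by (simp add: g_def)
qed

lemma saturated_control_time_minimizer:
  assumes adm: "admissible T \<gamma> u" and i: "i \<in> {1, 2}" and c: "c \<in> {1, -1}"
    and sat: "AE t in lebesgue. t \<in> {0..T} \<longrightarrow> u i t = c"
  shows "time_minimizer T \<gamma>"
  unfolding time_minimizer_def
proof (intro allI impI)
  fix T' \<gamma>' u' assume H: "admissible T' \<gamma>' u' \<and> \<gamma>' 0 = \<gamma> 0 \<and> \<gamma>' T' = \<gamma> T"
  have "0 \<le> T"
    using adm by (simp add: admissible_def)
  have "T = \<bar>horizontal_coord i (\<gamma> T) - horizontal_coord i (\<gamma> 0)\<bar>"
    using admissible_horizontal_displacement_eq[OF adm i sat] c \<open>0 \<le> T\<close> by (auto simp: abs_mult)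
  also have "\<dots> \<le> T'"
    using admissible_horizontal_displacement_le[of T' \<gamma>' u' i] H i by simp
  finally show "T \<le> T'" .
qed

theorem mainTheorem3:
  shows
  "(\<forall>T lam \<gamma> u j a b. extremal_pair T lam \<gamma> u \<and> (\<exists>s\<in>{0..T}. \<exists>t\<in>{0..T}. \<gamma> s \<noteq> \<gamma> t) \<and>
       j \<in> {1,2} \<and> 0 \<le> a \<and> a < b \<and> b \<le> T \<and> (\<forall>t\<in>{a<..<b}. phi lam \<gamma> j t = 0)
     \<longrightarrow> (\<forall>t\<in>{0..T}. phi lam \<gamma> j t = 0) \<and>
         (\<exists>c\<in>{1, -1}. AE t in lebesgue. t \<in> {0..T} \<longrightarrow> u (3 - j) t = c))
   \<and>
   (\<forall>T \<gamma> u i c. admissible T \<gamma> u \<and> i \<in> {1,2} \<and> c \<in> {1, -1} \<and>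
       (AE t in lebesgue. t \<in> {0..T} \<longrightarrow> u i t = c)
     \<longrightarrow> (\<exists>lam. extremal_pair T lam \<gamma> u \<and> (\<forall>t\<in>{0..T}. phi lam \<gamma> (3 - i) t = 0)))
   \<and>
   (\<forall>T \<gamma> u i c. admissible T \<gamma> u \<and> i \<in> {1,2} \<and> c \<in> {1, -1} \<and>
       (AE t in lebesgue. t \<in> {0..T} \<longrightarrow> u i t = c)
     \<longrightarrow> time_minimizer T \<gamma>)"
proof (intro conjI allI impI; elim conjE)
  show "\<forall>t\<in>{0..T}. phi lam \<gamma> j t = 0" "\<exists>c\<in>{1, -1}. AE t in lebesgue. t \<in> {0..T} \<longrightarrow> u (3 - j) t = c"
    if "extremal_pair T lam \<gamma> u" "\<exists>s\<in>{0..T}. \<exists>t\<in>{0..T}. \<gamma> s \<noteq> \<gamma> t" "j \<in> {1, 2}"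
      "0 \<le> a" "a < b" "b \<le> T" "\<forall>t\<in>{a<..<b}. phi lam \<gamma> j t = 0"
    for T lam \<gamma> u j a b
    using singular_arc_global[OF that] by blast+
  show "\<exists>lam. extremal_pair T lam \<gamma> u \<and> (\<forall>t\<in>{0..T}. phi lam \<gamma> (3 - i) t = 0)"
    and "time_minimizer T \<gamma>"
    if "admissible T \<gamma> u" "i \<in> {1, 2}" "c \<in> {1, -1}" "AE t in lebesgue. t \<in> {0..T} \<longrightarrow> u i t = c"
    for T \<gamma> u i c
    using saturated_control_extremal_lift[OF that] saturated_control_time_minimizer[OF that] by blast+
qed

end
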